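(* Let $C=(1,c_2,c_3,c_4,c_5,c_6)=(1,c_2,2c_2-1,c_4,c_2+c_4-1,2c_4-1)$ be a system that is canonical and whose subsystem $(1,c_2,c_3,c_4,c_5)$ is noncanonical, and let $\ell=\lceil c_5/c_3\rceil$. Then $c_4\ge 3c_2-1$, $\mathrm{grd}_C(\ell c_3)\le\ell$, and $\mathrm{grd}_C(\ell c_3)=\ell c_3-c_5+1-\lfloor(\ell c_3-c_5)/c_2\rfloor(c_2-1)$.
   Context: A system is a tuple $C=(c_1,\dots,c_n)$ of integers with $1=c_1<c_2<\dots<c_n$; for $k\le n$, $(c_1,\dots,c_k)$ is a subsystem. For a positive integer $v$, $\mathrm{opt}_C(v)$ is the minimum of $\sum_i x_i$ over $x\in\mathbb{Z}_{\ge0}^n$ with $\sum_i c_ix_i=v$. The greedy representation of $v$ is produced by: for $i=n$ down to $1$, while $c_i\le$ remaining value, take a coin $c_i$. $\mathrm{grd}_C(v)$ is its number of coins. A positive integer $w$ is a counterexample if $\mathrm{opt}_C(w)<\mathrm{grd}_C(w)$; $C$ is canonical if it has none, noncanonical otherwise. *)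

theory Defs
  imports Complex_Main
begin

definition is_system :: "nat list \<Rightarrow> bool" where
  "is_system cs \<longleftrightarrow> cs \<noteq> [] \<and> cs ! 0 = 1 \<and> sorted_wrt (<) cs"

definition reps :: "nat list \<Rightarrow> nat \<Rightarrow> nat list set" where
  "reps cs v = {x. length x = length cs \<and> (\<Sum>i<length cs. cs ! i * x ! i) = v}"

definition opt :: "nat list \<Rightarrow> nat \<Rightarrow> nat" where
  "opt cs v = (LEAST k. \<exists>x \<in> reps cs v. sum_list x = k)"

text \<open>Greedy on a list of coins given in decreasing order: taking coin c while c \<le> remaining
  value amounts to taking (v div c) coins and leaving v mod c.\<close>
fun grd_desc :: "nat list \<Rightarrow> nat \<Rightarrow> nat" where
  "grd_desc [] v = 0"
| "grd_desc (c # cs) v = v div c + grd_desc cs (v mod c)"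

definition grd :: "nat list \<Rightarrow> nat \<Rightarrow> nat" where
  "grd cs v = grd_desc (rev cs) v"

definition canonical :: "nat list \<Rightarrow> bool" where
  "canonical cs \<longleftrightarrow> (\<forall>w>0. \<not> opt cs w < grd cs w)"

end

theory Submission
  imports Defs
begin

text \<open>If \<open>c\<^sub>4 < 3c\<^sub>2 - 1\<close>, then either \<open>c\<^sub>4 = 3c\<^sub>2 - 2\<close> and
  \<open>(1, c\<^sub>2, c\<^sub>3, c\<^sub>4, c\<^sub>5)\<close> is the arithmetic progression \<open>1, 1 + d, \<dots>, 1 + 4d\<close>
  with \<open>d = c\<^sub>2 - 1\<close>, which is canonical; or \<open>c\<^sub>4 = 2c\<^sub>2\<close> and \<open>2c\<^sub>3\<close> is a
  counterexample for \<open>C\<close>; or \<open>2c\<^sub>2 < c\<^sub>4 < 3c\<^sub>2 - 2\<close> and \<open>c\<^sub>2 + c\<^sub>3\<close> is one.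
  Once \<open>c\<^sub>4 \<ge> 3c\<^sub>2 - 1\<close> we have \<open>c\<^sub>5 + c\<^sub>3 \<le> c\<^sub>6\<close>, so \<open>\<ell>c\<^sub>3 \<in> [c\<^sub>5, c\<^sub>5 + c\<^sub>3)\<close>
  is paid greedily with one \<open>c\<^sub>5\<close> followed by coins \<open>c\<^sub>2\<close> and \<open>1\<close> only, while
  canonicity bounds the greedy count by the \<open>\<ell>\<close> coins \<open>c\<^sub>3\<close>.\<close>

lemma grd_desc_Cons_skip: "v < c \<Longrightarrow> grd_desc (c # cs) v = grd_desc cs v"
  by simp

lemma grd_desc_Cons_once:
  "c \<le> v \<Longrightarrow> v < 2 * c \<Longrightarrow> grd_desc (c # cs) v = Suc (grd_desc cs (v - c))"
  using le_div_geq[of c v] by (simp add: le_mod_geq)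

lemma grd_desc_zero [simp]: "grd_desc cs 0 = 0"
  by (induction cs) simp_all

lemma grd_desc_Cons_one: "grd_desc (1 # cs) v = v"
  by simp

lemmas grd_desc_steps = grd_desc_Cons_skip grd_desc_Cons_once grd_desc_Cons_one[unfolded One_nat_def]

lemma opt_le_sum_list: "x \<in> reps cs v \<Longrightarrow> opt cs v \<le> sum_list x"
  unfolding opt_def by (rule Least_le) blast

lemma canonical_grd_le_sum_list:
  assumes "canonical cs" "0 < v" "x \<in> reps cs v"
  shows "grd cs v \<le> sum_list x"
  using assms opt_le_sum_list[OF assms(3)] unfolding canonical_def by (meson le_trans not_less)

lemma not_canonicalI:
  assumes "x \<in> reps cs v" "sum_list x < grd cs v"
  shows "\<not> canonical cs"
proof
  assume "canonical cs"
  moreover have "0 < v"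
    using assms(2) by (cases v) (simp_all add: grd_def)
  ultimately show False
    using canonical_grd_le_sum_list assms by (meson not_le)
qed

lemma reps_single_coin:
  assumes "i < length cs"
  shows "(replicate (length cs) 0)[i := n] \<in> reps cs (n * cs ! i)"
  using assms by (simp add: reps_def nth_list_update if_distrib[of "(*) _"] cong: if_cong)

lemma canonical_grd_mult_le:
  assumes "canonical cs" "i < length cs" "0 < n * cs ! i"
  shows "grd cs (n * cs ! i) \<le> n"
  using canonical_grd_le_sum_list[OF assms(1,3) reps_single_coin[OF assms(2)]] assms(2)
  by (simp add: sum_list_update sum_list_replicate)

lemma canonicalI:
  assumes "cs \<noteq> []" "cs ! 0 = 1"
    and grd_le: "\<And>v x. 0 < v \<Longrightarrow> x \<in> reps cs v \<Longrightarrow> grd cs v \<le> sum_list x"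
  shows "canonical cs"
  unfolding canonical_def
proof (intro allI impI)
  fix w :: nat assume "0 < w"
  have "\<exists>k. \<exists>x \<in> reps cs w. sum_list x = k"
    using reps_single_coin[of 0 cs w] assms(1,2) by auto
  then have "\<exists>x \<in> reps cs w. sum_list x = opt cs w"
    unfolding opt_def by (rule LeastI_ex)
  then show "\<not> opt cs w < grd cs w" using grd_le[OF \<open>0 < w\<close>] by force
qed

definition arith_prog_system :: "nat \<Rightarrow> nat \<Rightarrow> nat list" where
  "arith_prog_system d k = map (\<lambda>i. 1 + i * d) [0..<Suc k]"

lemma grd_desc_arith_prog_le_step:
  assumes "t \<le> d"
  shows "grd_desc (map (\<lambda>i. 1 + i * d) (rev [0..<Suc k])) t = t"
  using assms by (induction k) (simp_all add: grd_desc_Cons_skip)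

lemma grd_desc_arith_prog:
  assumes "0 < r" "r \<le> k * d"
  shows "grd_desc (map (\<lambda>i. 1 + i * d) (rev [0..<k])) r = 1 + (r - 1) mod d"
  using assms
proof (induction k arbitrary: r)
  case 0
  then show ?case by simp
next
  case (Suc k)
  show ?case
  proof (cases "r \<le> k * d")
    case True
    then show ?thesis using Suc by (simp add: grd_desc_Cons_skip)
  next
    case False
    define t where "t = r - 1 - k * d"
    have t: "t < d" "r = 1 + k * d + t" using False Suc.prems unfolding t_def by simp_all
    have "(r - 1) mod d = t"
      using t by (simp add: mod_add_left_eq[symmetric])
    moreover have "grd_desc (map (\<lambda>i. 1 + i * d) (rev [0..<Suc k])) r = 1 + t"
    proof (cases k)
      case 0
      then show ?thesis using t by simp
    next
      case (Suc k')
      have "grd_desc (map (\<lambda>i. 1 + i * d) (rev [0..<Suc k])) r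
          = Suc (grd_desc (map (\<lambda>i. 1 + i * d) (rev [0..<Suc k'])) t)"
        using t Suc by (simp add: grd_desc_Cons_once del: grd_desc.simps(2))
      then show ?thesis using t grd_desc_arith_prog_le_step[of t d k'] by simp
    qed
    ultimately show ?thesis by simp
  qed
qed

lemma canonical_arith_prog_system: "canonical (arith_prog_system d k)" (is "canonical ?cs")
proof (rule canonicalI)
  show "?cs \<noteq> []" "?cs ! 0 = 1"
    by (simp_all add: arith_prog_system_def del: upt_Suc)
next
  fix v x assume "0 < v" "x \<in> reps ?cs v"
  then have len: "length x = Suc k" and "(\<Sum>i<Suc k. ?cs ! i * x ! i) = v"
    by (simp_all add: reps_def arith_prog_system_def)
  then have weighted: "(\<Sum>i<Suc k. (1 + i * d) * x ! i) = v"
    by (simp add: arith_prog_system_def nth_map del: upt_Suc)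
  define s where "s = sum_list x"
  define K where "K = (\<Sum>i<Suc k. i * x ! i)"
  have s: "s = (\<Sum>i<Suc k. x ! i)"
    unfolding s_def sum_list_sum_nth len by (simp add: atLeast0LessThan)
  have v: "v = s + d * K"
    unfolding s K_def weighted[symmetric] by (simp add: algebra_simps sum.distrib sum_distrib_left)
  have "K \<le> (\<Sum>i<Suc k. k * x ! i)"
    unfolding K_def by (rule sum_mono) simp
  then have "K \<le> k * s" by (simp only: s sum_distrib_left)
  then have v_le: "v \<le> (1 + k * d) * s"
    using v mult_le_mono2[of K "k * s" d] by (simp add: algebra_simps)
  define q where "q = v div (1 + k * d)"
  define r where "r = v mod (1 + k * d)"
  have vq: "v = (1 + k * d) * q + r"
    unfolding q_def r_def by (rule mult_div_mod_eq[symmetric])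
  have "r < 1 + k * d"
    unfolding r_def by simp
  have grd: "grd ?cs v = q + grd_desc (map (\<lambda>i. 1 + i * d) (rev [0..<k])) r"
    by (simp add: grd_def arith_prog_system_def rev_map q_def r_def)
  show "grd ?cs v \<le> sum_list x"
  proof (cases "r = 0")
    case True
    then have "(1 + k * d) * q \<le> (1 + k * d) * s" using vq v_le by linarith
    then have "q \<le> s" by (rule mult_le_cancel1[THEN iffD1, THEN mp]) simp
    then show ?thesis using grd True s_def by simp
  next
    case False
    then have "(1 + k * d) * q < (1 + k * d) * s" using vq v_le by linarith
    then have "q < s" by (rule mult_less_cancel1[THEN iffD1, THEN conjunct2])
    define e where "e = s - q"
    \<comment> \<open>Every coin is \<open>1\<close> modulo \<open>d\<close>, so the number of coins is congruent to the value.\<close>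
    have "(e - 1) + d * K = (r - 1) + d * (k * q)"
      using v vq \<open>q < s\<close> False unfolding e_def by (simp add: algebra_simps)
    then have "(e - 1) mod d = (r - 1) mod d"
      by (metis mod_mult_self2)
    then have "(r - 1) mod d \<le> e - 1"
      by (metis mod_less_eq_dividend)
    moreover have "r \<le> k * d" using \<open>r < 1 + k * d\<close> by simp
    ultimately show ?thesis
      using grd grd_desc_arith_prog[of r k d] False \<open>q < s\<close> unfolding e_def s_def by simp
  qed
qed

definition six_coin_system :: "nat \<Rightarrow> nat \<Rightarrow> nat list" where
  "six_coin_system c2 c4 = [1, c2, 2 * c2 - 1, c4, c2 + c4 - 1, 2 * c4 - 1]"

lemma reps_six_coin_system:
  "x \<in> reps (six_coin_system c2 c4) v \<longleftrightarrow> length x = 6 \<and>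
     x ! 0 + c2 * x ! 1 + (2 * c2 - 1) * x ! 2 + c4 * x ! 3 + (c2 + c4 - 1) * x ! 4
       + (2 * c4 - 1) * x ! 5 = v"
  by (simp add: reps_def six_coin_system_def numeral_eq_Suc add_ac)

lemma not_canonical_six_coin_system_double:
  assumes "3 \<le> c2"
  shows "\<not> canonical (six_coin_system c2 (2 * c2))"
proof (rule not_canonicalI)
  show "[0, 0, 2, 0, 0, 0] \<in> reps (six_coin_system c2 (2 * c2)) (2 * (2 * c2 - 1))"
    by (simp add: reps_six_coin_system)
  have "grd (six_coin_system c2 (2 * c2)) (2 * (2 * c2 - 1)) = c2"
    using assms by (simp add: grd_def six_coin_system_def grd_desc_steps del: grd_desc.simps(2))
  then show "sum_list [0, 0, 2, 0, 0, 0] < grd (six_coin_system c2 (2 * c2)) (2 * (2 * c2 - 1))"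
    using assms by simp
qed

lemma not_canonical_six_coin_system_mid:
  assumes "2 * c2 < c4" "c4 + 2 < 3 * c2"
  shows "\<not> canonical (six_coin_system c2 c4)"
proof (rule not_canonicalI)
  show "[0, 1, 1, 0, 0, 0] \<in> reps (six_coin_system c2 c4) (3 * c2 - 1)"
    using assms by (simp add: reps_six_coin_system)
  have "grd (six_coin_system c2 c4) (3 * c2 - 1) = 1 + (3 * c2 - 1 - c4)"
    using assms by (simp add: grd_def six_coin_system_def grd_desc_steps del: grd_desc.simps(2))
  then show "sum_list [0, 1, 1, 0, 0, 0] < grd (six_coin_system c2 c4) (3 * c2 - 1)"
    using assms by simp
qed

lemma grd_six_coin_system:
  assumes "1 < c2" "3 * c2 - 1 \<le> c4" "c2 + c4 - 1 \<le> m" "m < (c2 + c4 - 1) + (2 * c2 - 1)"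
  shows "grd (six_coin_system c2 c4) m
    = 1 + (m - (c2 + c4 - 1)) div c2 + (m - (c2 + c4 - 1)) mod c2"
  using assms by (simp add: grd_def six_coin_system_def grd_desc_steps del: grd_desc.simps(2)) simp

lemma c4_ge_if_canonical_six_coin_system:
  assumes "is_system (six_coin_system c2 c4)" "canonical (six_coin_system c2 c4)"
    and "\<not> canonical (take 5 (six_coin_system c2 c4))"
  shows "3 * c2 - 1 \<le> c4"
proof (rule ccontr)
  assume "\<not> ?thesis"
  moreover have "1 < c2" "2 * c2 - 1 < c4"
    using assms(1) by (simp_all add: is_system_def six_coin_system_def)
  ultimately consider "c4 = 3 * c2 - 2" | "c4 = 2 * c2" "3 \<le> c2" | "2 * c2 < c4" "c4 + 2 < 3 * c2"
    by linarith
  then show False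
  proof cases
    case 1
    then have "take 5 (six_coin_system c2 c4) = arith_prog_system (c2 - 1) 4"
      using \<open>1 < c2\<close> by (simp add: six_coin_system_def arith_prog_system_def numeral_eq_Suc)
        (intro conjI; linarith)
    then show False
      using assms(3) canonical_arith_prog_system by simp
  next
    case 2
    then show False using assms(2) not_canonical_six_coin_system_double by simp
  next
    case 3
    then show False using assms(2) not_canonical_six_coin_system_mid by simp
  qed
qed

lemma nat_ceiling_divide_bounds:
  fixes a b :: nat
  assumes "0 < b"
  shows "a \<le> nat \<lceil>real a / real b\<rceil> * b" and "nat \<lceil>real a / real b\<rceil> * b < a + b"
proof -
  have q: "real (nat \<lceil>real a / real b\<rceil>) = of_int \<lceil>real a / real b\<rceil>"
    by simp
  have "real a \<le> real (nat \<lceil>real a / real b\<rceil>) * real b"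
    using ceiling_divide_upper[of "real b" "real a"] assms q by simp
  then show "a \<le> nat \<lceil>real a / real b\<rceil> * b"
    by (metis of_nat_le_iff of_nat_mult)
  have "(real (nat \<lceil>real a / real b\<rceil>) - 1) * real b < real a"
    using ceiling_divide_lower[of "real b" "real a"] assms q by simp
  then have "real (nat \<lceil>real a / real b\<rceil>) * real b < real a + real b"
    by (simp add: algebra_simps)
  then show "nat \<lceil>real a / real b\<rceil> * b < a + b"
    by (metis of_nat_add of_nat_less_iff of_nat_mult)
qed

theorem lemma9:
  fixes c2 c4 :: nat
  defines "c3 \<equiv> 2 * c2 - 1" and "c5 \<equiv> c2 + c4 - 1" and "c6 \<equiv> 2 * c4 - 1"
  defines "C \<equiv> [1, c2, c3, c4, c5, c6]"
  defines "l \<equiv> nat \<lceil>real c5 / real c3\<rceil>"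
  assumes "is_system C"
    and "canonical C"
    and "\<not> canonical (take 5 C)"
  shows "c4 \<ge> 3 * c2 - 1 \<and> grd C (l * c3) \<le> l \<and>
         int (grd C (l * c3)) = int (l * c3) - int c5 + 1
            - \<lfloor>(real (l * c3) - real c5) / real c2\<rfloor> * (int c2 - 1)"
proof -
  have C: "C = six_coin_system c2 c4"
    by (simp add: C_def c3_def c5_def c6_def six_coin_system_def)
  have "1 < c2"
    using assms(6) by (simp add: C is_system_def six_coin_system_def)
  have c4_ge: "3 * c2 - 1 \<le> c4"
    using c4_ge_if_canonical_six_coin_system assms(6-8) C by simp
  have lower: "c5 \<le> l * c3" and upper: "l * c3 < c5 + c3"
    using nat_ceiling_divide_bounds[of c3 c5] \<open>1 < c2\<close> unfolding l_def c3_def by simp_all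
  have "0 < l * c3"
    using lower \<open>1 < c2\<close> unfolding c5_def by linarith
  then have grd_le: "grd C (l * c3) \<le> l"
    using canonical_grd_mult_le[OF assms(7), of 2 l] by (simp add: C_def)
  define r where "r = l * c3 - c5"
  have grd: "grd C (l * c3) = 1 + r div c2 + r mod c2"
    using grd_six_coin_system[OF \<open>1 < c2\<close> c4_ge] lower upper
    unfolding C r_def c3_def c5_def by simp
  have "real (l * c3) - real c5 = real r"
    using lower unfolding r_def by (simp only: of_nat_diff)
  then have "\<lfloor>(real (l * c3) - real c5) / real c2\<rfloor> = int (r div c2)"
    by (simp only: floor_divide_of_nat_eq)
  moreover have "int r = int (r div c2) * int c2 + int (r mod c2)"
    by (metis div_mult_mod_eq of_nat_add of_nat_mult)
  ultimately show ?thesis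
    using c4_ge grd_le grd lower unfolding r_def by (simp add: of_nat_diff algebra_simps)
qed

end
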